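(* Let $G_1,\dots,G_k$ be finitely many graphs which are pairwise consistent, and let $\overline r_1,\dots,\overline r_k$ be pairwise consistent rotation sequences such that the graphs $\overline r_1G_1,\dots,\overline r_kG_k$ are pairwise consistent. Then there exists a rotation sequence $\overline r$ such that $$\bigcup_{i=1}^k\overline r_iG_i=\overline r\bigcup_{i=1}^kG_i.$$
   Context: Fix $n\ge1$, ports $\pi=\{0,\dots,n+1\}$, gluings the odd permutations of $\pi$. A graph $G$ has vertices $V(G)$, semi-edges $S(G)$ (elements $(u\!:\!p)$) and edges $E(G)$ (elements $(u\!:\!p,\gamma,v\!:\!q)$) such that: no $u\!:\!p$ is both a semi-edge and the start of an edge; at most one edge starts at each $u\!:\!p$; each vertex has exactly $n+1$ ports appearing in semi-edges or edges; if $(u\!:\!p,\gamma,v\!:\!q)$ is an edge then $\gamma$ maps the ports of $u$ onto those of $v$, $\gamma(p)=q$, and $(v\!:\!q,\gamma^{-1},u\!:\!p)$ is an edge. Graphs $G,H$ are consistent iff for all $u\in V(G)\cap V(H)$, $i\in\pi$, $v\in V(G)\cup V(H)$, $j\in\pi$ and gluing $\gamma$: ($(u\!:\!i,\gamma,v\!:\!j)\in E(G)$ or $(u\!:\!i)\in S(G)$) iff ($(u\!:\!i,\gamma,v\!:\!j)\in E(H)$ or $(u\!:\!i)\in S(H)$). The union of consistent graphs is taken componentwise on vertices, edges and semi-edges. For a vertex $u$ and an even permutation $\rho$ of $\pi$, the vertex rotation $\rho_u$ replaces each edge $(u\!:\!p,\gamma,v\!:\!q)$ by $(u\!:\!\rho(p),\gamma\circ\rho^{-1},v\!:\!q)$,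 each edge $(v\!:\!q,\gamma^{-1},u\!:\!p)$ by $(v\!:\!q,\rho\circ\gamma^{-1},u\!:\!\rho(p))$, each semi-edge $(u\!:\!p)$ by $(u\!:\!\rho(p))$, leaving the rest unchanged. A rotation sequence is a finite composition of vertex rotations. Since vertex rotations at distinct vertices commute, for a rotation sequence $\overline r$ and a vertex $u$ one defines $(\overline r/u)$ as the ordered composite of the vertex rotations of $\overline r$ acting at $u$. Two rotation sequences $\overline r_1,\overline r_2$ are consistent iff $(\overline r_1/u)=(\overline r_2/u)$ for every vertex $u$ on which both act. *)

theory Defs
  imports "HOL-Combinatorics.Permutations"
begin

definition ports_set :: "nat \<Rightarrow> nat set" where
  "ports_set n = {0..n+1}"

definition gluing :: "nat \<Rightarrow> (nat \<Rightarrow> nat) \<Rightarrow> bool" where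
  "gluing n \<gamma> \<longleftrightarrow> \<gamma> permutes ports_set n \<and> \<not> evenperm \<gamma>"

definition even_rot :: "nat \<Rightarrow> (nat \<Rightarrow> nat) \<Rightarrow> bool" where
  "even_rot n \<rho> \<longleftrightarrow> \<rho> permutes ports_set n \<and> evenperm \<rho>"

text \<open>A graph: vertices, semi-edges (u:p), edges (u:p, gamma, v:q).\<close>
record 'v graph =
  V :: "'v set"
  S :: "('v \<times> nat) set"
  E :: "('v \<times> nat \<times> (nat \<Rightarrow> nat) \<times> 'v \<times> nat) set"

definition vports :: "'v graph \<Rightarrow> 'v \<Rightarrow> nat set" where
  "vports G u = {p. (u, p) \<in> S G \<or> (\<exists>\<gamma> v q. (u, p, \<gamma>, v, q) \<in> E G)}"

definition is_graph :: "nat \<Rightarrow> 'v graph \<Rightarrow> bool" where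
  "is_graph n G \<longleftrightarrow>
     (\<forall>(u, p) \<in> S G. u \<in> V G \<and> p \<in> ports_set n) \<and>
     (\<forall>(u, p, \<gamma>, v, q) \<in> E G. u \<in> V G \<and> v \<in> V G \<and> p \<in> ports_set n \<and>
          q \<in> ports_set n \<and> gluing n \<gamma>) \<and>
     (\<forall>u p \<gamma> v q. (u, p, \<gamma>, v, q) \<in> E G \<longrightarrow> (u, p) \<notin> S G) \<and>
     (\<forall>u p \<gamma> v q \<gamma>' v' q'. (u, p, \<gamma>, v, q) \<in> E G \<longrightarrow> (u, p, \<gamma>', v', q') \<in> E G \<longrightarrow>
          \<gamma> = \<gamma>' \<and> v = v' \<and> q = q') \<and>
     (\<forall>u \<in> V G. card (vports G u) = n + 1) \<and>
     (\<forall>u p \<gamma> v q. (u, p, \<gamma>, v, q) \<in> E G \<longrightarrow>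
          \<gamma> ` vports G u = vports G v \<and> \<gamma> p = q \<and> (v, q, inv \<gamma>, u, p) \<in> E G)"

definition consistent :: "nat \<Rightarrow> 'v graph \<Rightarrow> 'v graph \<Rightarrow> bool" where
  "consistent n G H \<longleftrightarrow>
     (\<forall>u \<in> V G \<inter> V H. \<forall>i \<in> ports_set n. \<forall>v \<in> V G \<union> V H. \<forall>j \<in> ports_set n.
        \<forall>\<gamma>. gluing n \<gamma> \<longrightarrow>
          (((u, i, \<gamma>, v, j) \<in> E G \<or> (u, i) \<in> S G) \<longleftrightarrow>
           ((u, i, \<gamma>, v, j) \<in> E H \<or> (u, i) \<in> S H)))"

definition graph_Union :: "'i set \<Rightarrow> ('i \<Rightarrow> 'v graph) \<Rightarrow> 'v graph" where
  "graph_Union I G = \<lparr> V = (\<Union>i\<in>I. V (G i)), S = (\<Union>i\<in>I. S (G i)), E = (\<Union>i\<in>I. E (G i)) \<rparr>"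

text \<open>For an edge (a:p, gamma, b:q): the start port is rotated
if a = u, the end port if b = u, and the gluing is adjusted accordingly; this covers
both replacement rules of the definition (and loops at u).\<close>
definition vrot :: "'v \<Rightarrow> (nat \<Rightarrow> nat) \<Rightarrow> 'v graph \<Rightarrow> 'v graph" where
  "vrot u \<rho> G = \<lparr> V = V G,
     S = (\<lambda>(a, p). (a, if a = u then \<rho> p else p)) ` S G,
     E = (\<lambda>(a, p, \<gamma>, b, q).
            (a, if a = u then \<rho> p else p,
             (if b = u then \<rho> else id) \<circ> \<gamma> \<circ> (if a = u then inv \<rho> else id),
             b, if b = u then \<rho> q else q)) ` E G \<rparr>"

text \<open>A rotation sequence is a finite list of vertex rotations, applied from the
head of the list onwards.\<close>
type_synonym 'v rotseq = "('v \<times> (nat \<Rightarrow> nat)) list"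

definition is_rotseq :: "nat \<Rightarrow> 'v rotseq \<Rightarrow> bool" where
  "is_rotseq n rs \<longleftrightarrow> (\<forall>(u, \<rho>) \<in> set rs. even_rot n \<rho>)"

definition apply_rotseq :: "'v rotseq \<Rightarrow> 'v graph \<Rightarrow> 'v graph" where
  "apply_rotseq rs G = foldl (\<lambda>H (u, \<rho>). vrot u \<rho> H) G rs"

text \<open>(r/u): the ordered composite of the rotations of r at u (in application order).\<close>
definition rot_at :: "'v rotseq \<Rightarrow> 'v \<Rightarrow> (nat \<Rightarrow> nat)" where
  "rot_at rs u = foldl (\<lambda>acc (w, \<rho>). if w = u then \<rho> \<circ> acc else acc) id rs"

definition acts_on :: "'v rotseq \<Rightarrow> 'v \<Rightarrow> bool" where
  "acts_on rs u \<longleftrightarrow> u \<in> fst ` set rs"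

definition rotseq_consistent :: "'v rotseq \<Rightarrow> 'v rotseq \<Rightarrow> bool" where
  "rotseq_consistent r1 r2 \<longleftrightarrow>
     (\<forall>u. acts_on r1 u \<and> acts_on r2 u \<longrightarrow> rot_at r1 u = rot_at r2 u)"

end

theory Submission
  imports Defs
begin

text \<open>Applying a rotation sequence \<open>r\<close> rotates every vertex \<open>u\<close> by the single even permutation
  \<open>(r/u)\<close>, so rotation sequences amount to finitely supported families of even vertex
  rotations. At a vertex \<open>u\<close> of both \<open>G\<^sub>i\<close> and \<open>G\<^sub>j\<close>, consistency of \<open>G\<^sub>i\<close> and \<open>G\<^sub>j\<close> says that
  \<open>u\<close> carries the same semi-edges and edges in both, and consistency of \<open>r\<^sub>iG\<^sub>i\<close> and \<open>r\<^sub>jG\<^sub>j\<close> says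
  the same after rotation. Hence the part of \<open>r\<^sub>iG\<^sub>i\<close> at \<open>u\<close> is obtained equally well by
  rotating \<open>u\<close> and its neighbours with \<open>r\<^sub>j\<close>. Choosing for each vertex one graph (its home)
  containing it and rotating the vertex with the sequence of that graph thus gives one
  rotation of the union reproducing every \<open>r\<^sub>iG\<^sub>i\<close>: the two ends of an edge lie in exactly
  the same graphs, so they have the same home.\<close>

lemma even_rot_id: "even_rot n id"
  unfolding even_rot_def by simp

lemma even_rot_comp: "even_rot n a \<Longrightarrow> even_rot n b \<Longrightarrow> even_rot n (a \<circ> b)"
  unfolding even_rot_def ports_set_def
  by (metis evenperm_comp finite_atLeastAtMost permutes_compose permutes_imp_permutation)

lemma even_rot_bij: "even_rot n a \<Longrightarrow> bij a"
  unfolding even_rot_def using permutes_bij by blast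

lemma gluing_conj_even_rot:
  "even_rot n a \<Longrightarrow> even_rot n b \<Longrightarrow> gluing n \<gamma> \<Longrightarrow> gluing n (a \<circ> \<gamma> \<circ> inv b)"
  unfolding even_rot_def gluing_def ports_set_def
  by (metis evenperm_comp evenperm_inv finite_atLeastAtMost permutes_compose permutes_inv
      permutes_imp_permutation)

lemma gluing_transpose_0_1: "gluing n (transpose 0 1)"
  unfolding gluing_def ports_set_def by (simp add: permutes_swap_id evenperm_swap)

definition rotate_by :: "('v \<Rightarrow> nat \<Rightarrow> nat) \<Rightarrow> 'v graph \<Rightarrow> 'v graph" where
  "rotate_by R G = \<lparr> V = V G,
     S = (\<lambda>(a, p). (a, R a p)) ` S G,
     E = (\<lambda>(a, p, \<gamma>, b, q). (a, R a p, R b \<circ> \<gamma> \<circ> inv (R a), b, R b q)) ` E G \<rparr>"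

lemma V_rotate_by [simp]: "V (rotate_by R G) = V G"
  unfolding rotate_by_def by simp

lemma rotate_by_id: "rotate_by (\<lambda>_. id) G = G"
  unfolding rotate_by_def by (cases G) auto

lemma rotate_by_graph_Union:
  "rotate_by R (graph_Union I G) = graph_Union I (\<lambda>i. rotate_by R (G i))"
  unfolding rotate_by_def graph_Union_def by (simp add: image_UN)

lemma vrot_rotate_by:
  assumes "bij \<rho>" "bij (R u)"
  shows "vrot u \<rho> (rotate_by R G) = rotate_by (R(u := \<rho> \<circ> R u)) G"
proof -
  have "inv (\<rho> \<circ> R u) = inv (R u) \<circ> inv \<rho>" using assms o_inv_distrib by blast
  then show ?thesis
    unfolding vrot_def rotate_by_def by (auto simp: image_image comp_assoc intro!: image_cong)
qed

lemma rot_at_Nil: "rot_at [] = (\<lambda>_. id)"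
  unfolding rot_at_def by simp

lemma rot_at_snoc: "rot_at (rs @ [(w, \<rho>)]) = (rot_at rs)(w := \<rho> \<circ> rot_at rs w)"
  unfolding rot_at_def by auto

lemma even_rot_rot_at: "is_rotseq n rs \<Longrightarrow> even_rot n (rot_at rs u)"
proof (induction rs rule: rev_induct)
  case Nil
  show ?case unfolding rot_at_Nil by (rule even_rot_id)
next
  case (snoc x rs)
  then obtain w \<rho> where "x = (w, \<rho>)" "is_rotseq n rs" "even_rot n \<rho>"
    unfolding is_rotseq_def by (cases x) auto
  with snoc.IH show ?case by (auto simp: rot_at_snoc even_rot_comp)
qed

lemma rot_at_not_acts: "\<not> acts_on rs u \<Longrightarrow> rot_at rs u = id"
proof (induction rs rule: rev_induct)
  case Nil
  then show ?case by (simp add: rot_at_Nil)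
next
  case (snoc x rs)
  then show ?case by (cases x) (auto simp: acts_on_def rot_at_snoc)
qed

lemma rot_at_map_distinct:
  "distinct us \<Longrightarrow> rot_at (map (\<lambda>u. (u, R u)) us) = (\<lambda>u. if u \<in> set us then R u else id)"
proof (induction us rule: rev_induct)
  case Nil
  then show ?case by (simp add: rot_at_Nil)
next
  case (snoc x us)
  then show ?case by (auto simp: rot_at_snoc)
qed

lemma rotseq_of_finite_support:
  assumes "finite {u. R u \<noteq> id}" and "\<And>u. even_rot n (R u)"
  shows "\<exists>rs. is_rotseq n rs \<and> rot_at rs = R"
proof -
  obtain us where us: "set us = {u. R u \<noteq> id}" "distinct us"
    using finite_distinct_list[OF assms(1)] by blast
  have "rot_at (map (\<lambda>u. (u, R u)) us) = R"
    using us by (auto simp: rot_at_map_distinct)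
  moreover have "is_rotseq n (map (\<lambda>u. (u, R u)) us)"
    unfolding is_rotseq_def using assms(2) by auto
  ultimately show ?thesis by blast
qed

lemma apply_rotseq_eq_rotate_by:
  "is_rotseq n rs \<Longrightarrow> apply_rotseq rs G = rotate_by (rot_at rs) G"
proof (induction rs rule: rev_induct)
  case Nil
  show ?case unfolding rot_at_Nil rotate_by_id by (simp add: apply_rotseq_def)
next
  case (snoc x rs)
  then obtain w \<rho> where x: "x = (w, \<rho>)" and "is_rotseq n rs" "even_rot n \<rho>"
    unfolding is_rotseq_def by (cases x) auto
  then have "apply_rotseq (rs @ [x]) G = vrot w \<rho> (rotate_by (rot_at rs) G)"
    using snoc.IH by (simp add: apply_rotseq_def)
  also have "\<dots> = rotate_by (rot_at (rs @ [x])) G"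
    using vrot_rotate_by even_rot_bij even_rot_rot_at \<open>is_rotseq n rs\<close> \<open>even_rot n \<rho>\<close>
    by (metis x rot_at_snoc)
  finally show ?case .
qed

definition semi_edges_at :: "'v graph \<Rightarrow> 'v \<Rightarrow> nat set" where
  "semi_edges_at G u = {p. (u, p) \<in> S G}"

definition edges_at :: "'v graph \<Rightarrow> 'v \<Rightarrow> (nat \<times> (nat \<Rightarrow> nat) \<times> 'v \<times> nat) set" where
  "edges_at G u = {(p, \<gamma>, v, q). (u, p, \<gamma>, v, q) \<in> E G}"

lemma graph_eqI:
  assumes "V G = V H"
    and "\<And>u. semi_edges_at G u = semi_edges_at H u"
    and "\<And>u. edges_at G u = edges_at H u"
  shows "G = H"
proof -
  have "S G = S H" using assms(2) unfolding semi_edges_at_def by (auto simp: set_eq_iff)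
  moreover have "E G = E H" using assms(3) unfolding edges_at_def by (auto simp: set_eq_iff)
  ultimately show ?thesis using assms(1) by (cases G, cases H) simp
qed

lemma semi_edges_at_rotate_by: "semi_edges_at (rotate_by R G) u = R u ` semi_edges_at G u"
  unfolding semi_edges_at_def rotate_by_def by force

lemma edges_at_rotate_by:
  "edges_at (rotate_by R G) u =
     (\<lambda>(p, \<gamma>, v, q). (R u p, R v \<circ> \<gamma> \<circ> inv (R u), v, R v q)) ` edges_at G u"
  unfolding edges_at_def rotate_by_def by force

text \<open>The local conditions of \<^const>\<open>is_graph\<close>: all that the consistency arguments
  need, and easily seen to survive \<^const>\<open>rotate_by\<close>.\<close>

definition is_pregraph :: "nat \<Rightarrow> 'v graph \<Rightarrow> bool" where
  "is_pregraph n G \<longleftrightarrow>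
     (\<forall>(u, p) \<in> S G. u \<in> V G \<and> p \<in> ports_set n) \<and>
     (\<forall>(u, p, \<gamma>, v, q) \<in> E G. u \<in> V G \<and> v \<in> V G \<and> p \<in> ports_set n \<and>
          q \<in> ports_set n \<and> gluing n \<gamma>) \<and>
     (\<forall>u p \<gamma> v q. (u, p, \<gamma>, v, q) \<in> E G \<longrightarrow> (u, p) \<notin> S G) \<and>
     (\<forall>u p \<gamma> v q \<gamma>' v' q'. (u, p, \<gamma>, v, q) \<in> E G \<longrightarrow> (u, p, \<gamma>', v', q') \<in> E G \<longrightarrow>
          \<gamma> = \<gamma>' \<and> v = v' \<and> q = q')"

lemma is_graph_pregraph: "is_graph n G \<Longrightarrow> is_pregraph n G"
  unfolding is_graph_def is_pregraph_def by (elim conjE) (intro conjI; assumption)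

lemma is_graph_reverse_edge: "is_graph n G \<Longrightarrow> (u, p, \<gamma>, v, q) \<in> E G \<Longrightarrow> (v, q, inv \<gamma>, u, p) \<in> E G"
  unfolding is_graph_def by blast

lemma pregraph_semi_edgeD:
  "is_pregraph n G \<Longrightarrow> (u, p) \<in> S G \<Longrightarrow> u \<in> V G \<and> p \<in> ports_set n"
  unfolding is_pregraph_def by fastforce

lemma pregraph_edgeD:
  "is_pregraph n G \<Longrightarrow> (u, p, \<gamma>, v, q) \<in> E G \<Longrightarrow>
     u \<in> V G \<and> v \<in> V G \<and> p \<in> ports_set n \<and> q \<in> ports_set n \<and> gluing n \<gamma> \<and> (u, p) \<notin> S G"
  unfolding is_pregraph_def by fast

lemma pregraph_semi_edges_at_outside: "is_pregraph n G \<Longrightarrow> u \<notin> V G \<Longrightarrow> semi_edges_at G u = {}"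
  using pregraph_semi_edgeD unfolding semi_edges_at_def by fast

lemma pregraph_edges_at_outside: "is_pregraph n G \<Longrightarrow> u \<notin> V G \<Longrightarrow> edges_at G u = {}"
  using pregraph_edgeD unfolding edges_at_def by fast

lemma pregraph_edge_unique:
  "is_pregraph n G \<Longrightarrow> (u, p, \<gamma>, v, q) \<in> E G \<Longrightarrow> (u, p, \<gamma>', v', q') \<in> E G \<Longrightarrow> q = q'"
  unfolding is_pregraph_def by blast

lemma pregraph_rotate_by:
  assumes G: "is_pregraph n G" and R: "\<And>u. even_rot n (R u)"
  shows "is_pregraph n (rotate_by R G)"
proof -
  have ports: "R u p \<in> ports_set n" if "p \<in> ports_set n" for u p
    using R[of u] that unfolding even_rot_def by (simp add: permutes_in_image)
  have inj: "R u p = R u p' \<longleftrightarrow> p = p'" for u p p'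
    using even_rot_bij[OF R[of u]] by (meson bij_def inj_eq)
  have "gluing n \<gamma> \<Longrightarrow> gluing n (R b \<circ> \<gamma> \<circ> inv (R a))" for \<gamma> a b
    using gluing_conj_even_rot R by blast
  with G show ?thesis
    unfolding is_pregraph_def rotate_by_def by (auto simp: ports inj) metis+
qed

lemma consistent_sym: "consistent n A B \<Longrightarrow> consistent n B A"
  unfolding consistent_def by blast

lemma consistent_refl: "consistent n G G"
  unfolding consistent_def by blast

text \<open>Were \<open>u:p\<close> not a semi-edge of \<open>B\<close>, consistency with the semi-edge \<open>u:p\<close> of \<open>A\<close>
  would make \<open>u:p\<close> the start of an edge of \<open>B\<close> to every port, under every gluing.\<close>

lemma consistent_semi_edge_transfer:
  assumes AB: "consistent n A B" and A: "is_pregraph n A" and B: "is_pregraph n B"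
    and s: "(u, p) \<in> S A" and u: "u \<in> V B"
  shows "(u, p) \<in> S B"
proof (rule ccontr)
  assume "(u, p) \<notin> S B"
  moreover have "u \<in> V A" "p \<in> ports_set n" using pregraph_semi_edgeD[OF A s] by auto
  moreover have "0 \<in> ports_set n" "1 \<in> ports_set n" unfolding ports_set_def by auto
  ultimately have "(u, p, transpose 0 1, u, 0) \<in> E B" "(u, p, transpose 0 1, u, 1) \<in> E B"
    using AB s u gluing_transpose_0_1 unfolding consistent_def by blast+
  then show False using pregraph_edge_unique[OF B] by (metis zero_neq_one)
qed

lemma consistent_edge_transfer:
  assumes AB: "consistent n A B" and A: "is_pregraph n A" and B: "is_pregraph n B"
    and e: "(u, p, \<gamma>, v, q) \<in> E A" and u: "u \<in> V B"
  shows "(u, p, \<gamma>, v, q) \<in> E B"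
proof -
  have e': "u \<in> V A" "v \<in> V A" "p \<in> ports_set n" "q \<in> ports_set n" "gluing n \<gamma>" "(u, p) \<notin> S A"
    using pregraph_edgeD[OF A e] by auto
  then have "(u, p) \<notin> S B"
    using consistent_semi_edge_transfer[OF consistent_sym[OF AB] B A] by blast
  then show ?thesis using AB e e' u unfolding consistent_def by blast
qed

lemma semi_edges_at_consistent:
  assumes AB: "consistent n A B" and A: "is_pregraph n A" and B: "is_pregraph n B"
    and "u \<in> V A" "u \<in> V B"
  shows "semi_edges_at A u = semi_edges_at B u"
  using consistent_semi_edge_transfer[OF AB A B _ \<open>u \<in> V B\<close>]
    consistent_semi_edge_transfer[OF consistent_sym[OF AB] B A _ \<open>u \<in> V A\<close>]
  unfolding semi_edges_at_def by blast

lemma edges_at_consistent: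
  assumes AB: "consistent n A B" and A: "is_pregraph n A" and B: "is_pregraph n B"
    and "u \<in> V A" "u \<in> V B"
  shows "edges_at A u = edges_at B u"
  using consistent_edge_transfer[OF AB A B _ \<open>u \<in> V B\<close>]
    consistent_edge_transfer[OF consistent_sym[OF AB] B A _ \<open>u \<in> V A\<close>]
  unfolding edges_at_def by auto

definition home :: "'i set \<Rightarrow> ('i \<Rightarrow> 'v graph) \<Rightarrow> 'v \<Rightarrow> 'i" where
  "home I G u = (SOME i. i \<in> I \<and> u \<in> V (G i))"

lemma home_in: "i \<in> I \<Longrightarrow> u \<in> V (G i) \<Longrightarrow> home I G u \<in> I \<and> u \<in> V (G (home I G u))"
  unfolding home_def by (rule someI) blast

lemma rotseq_of_home_rotations:
  assumes "finite I" and "\<And>i. i \<in> I \<Longrightarrow> is_rotseq n (r i)"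
  shows "\<exists>rr. is_rotseq n rr \<and> (\<forall>i\<in>I. \<forall>u\<in>V (G i). rot_at rr u = rot_at (r (home I G u)) u)"
proof -
  \<comment> \<open>Off the graphs \<open>home\<close> is an arbitrary index, so there \<open>R\<close> is set to \<open>id\<close>.\<close>
  define R where "R u = (if \<exists>i\<in>I. u \<in> V (G i) then rot_at (r (home I G u)) u else id)" for u
  have home: "home I G u \<in> I" if "\<exists>i\<in>I. u \<in> V (G i)" for u
    using that home_in[of _ I u G] by blast
  have even_R: "even_rot n (R u)" for u
  proof (cases "\<exists>i\<in>I. u \<in> V (G i)")
    case True
    then show ?thesis using even_rot_rot_at[OF assms(2)[OF home[OF True]]] unfolding R_def by simp
  next
    case False
    then show ?thesis unfolding R_def by (simp only: if_False even_rot_id)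
  qed
  have "{u. R u \<noteq> id} \<subseteq> (\<Union>i\<in>I. fst ` set (r i))"
  proof
    fix u assume "u \<in> {u. R u \<noteq> id}"
    then have u: "\<exists>i\<in>I. u \<in> V (G i)" and "rot_at (r (home I G u)) u \<noteq> id"
      unfolding R_def by (auto split: if_splits)
    then have "acts_on (r (home I G u)) u" using rot_at_not_acts[of "r (home I G u)" u] by blast
    then show "u \<in> (\<Union>i\<in>I. fst ` set (r i))" using home[OF u] unfolding acts_on_def by blast
  qed
  then have "finite {u. R u \<noteq> id}" by (rule finite_subset) (simp add: assms(1))
  then obtain rr where "is_rotseq n rr" "rot_at rr = R"
    using rotseq_of_finite_support[of R n] even_R by blast
  moreover have "\<forall>i\<in>I. \<forall>u\<in>V (G i). R u = rot_at (r (home I G u)) u"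
    unfolding R_def by auto
  ultimately show ?thesis by auto
qed

context
  fixes n :: nat and I :: "'i set" and G :: "'i \<Rightarrow> 'v graph"
    and Rot :: "'i \<Rightarrow> 'v \<Rightarrow> nat \<Rightarrow> nat" and R :: "'v \<Rightarrow> nat \<Rightarrow> nat"
  assumes graphs: "\<And>i. i \<in> I \<Longrightarrow> is_graph n (G i)"
    and consistent_graphs: "\<And>i j. i \<in> I \<Longrightarrow> j \<in> I \<Longrightarrow> i \<noteq> j \<Longrightarrow> consistent n (G i) (G j)"
    and even_Rot: "\<And>i u. i \<in> I \<Longrightarrow> even_rot n (Rot i u)"
    and consistent_rotated:
      "\<And>i j. i \<in> I \<Longrightarrow> j \<in> I \<Longrightarrow> i \<noteq> j \<Longrightarrow>
         consistent n (rotate_by (Rot i) (G i)) (rotate_by (Rot j) (G j))"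
    and R_home: "\<And>i u. i \<in> I \<Longrightarrow> u \<in> V (G i) \<Longrightarrow> R u = Rot (home I G u) u"
begin

lemma consistent_members: "i \<in> I \<Longrightarrow> j \<in> I \<Longrightarrow> consistent n (G i) (G j)"
  using consistent_graphs[of i j] consistent_refl[of n "G i"] by (cases "i = j") auto

lemma consistent_rotated_members:
  "i \<in> I \<Longrightarrow> j \<in> I \<Longrightarrow> consistent n (rotate_by (Rot i) (G i)) (rotate_by (Rot j) (G j))"
  using consistent_rotated[of i j] consistent_refl[of n "rotate_by (Rot i) (G i)"] by (cases "i = j") auto

lemma pregraph_family: "i \<in> I \<Longrightarrow> is_pregraph n (G i)"
  using graphs is_graph_pregraph by blast

lemma pregraph_rotated_family: "i \<in> I \<Longrightarrow> is_pregraph n (rotate_by (Rot i) (G i))"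
  using pregraph_family pregraph_rotate_by even_Rot by blast

lemma home_edge:
  assumes i: "i \<in> I" and e: "(u, p, \<gamma>, v, q) \<in> E (G i)"
  shows "home I G v = home I G u"
proof -
  have rev: "(v, q, inv \<gamma>, u, p) \<in> E (G i)" using is_graph_reverse_edge[OF graphs[OF i] e] .
  have "u \<in> V (G j) \<longleftrightarrow> v \<in> V (G j)" if j: "j \<in> I" for j
    using consistent_edge_transfer[OF consistent_members[OF i j] pregraph_family[OF i]
        pregraph_family[OF j]] e rev pregraph_edgeD[OF pregraph_family[OF j]] by blast
  then have "(\<lambda>j. j \<in> I \<and> v \<in> V (G j)) = (\<lambda>j. j \<in> I \<and> u \<in> V (G j))" by blast
  then show ?thesis unfolding home_def by simp
qed

lemma semi_edges_at_rotate_by_home: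
  assumes i: "i \<in> I" and u: "u \<in> V (G i)"
  shows "semi_edges_at (rotate_by (Rot i) (G i)) u = semi_edges_at (rotate_by R (G i)) u"
proof -
  define j where "j = home I G u"
  have j: "j \<in> I" "u \<in> V (G j)" using home_in[where G = G, OF i u] unfolding j_def by auto
  have "semi_edges_at (rotate_by (Rot i) (G i)) u = semi_edges_at (rotate_by (Rot j) (G j)) u"
    using semi_edges_at_consistent[OF consistent_rotated_members[OF i j(1)] pregraph_rotated_family[OF i]
        pregraph_rotated_family[OF j(1)]] u j by simp
  also have "\<dots> = Rot j u ` semi_edges_at (G j) u" by (rule semi_edges_at_rotate_by)
  also have "\<dots> = R u ` semi_edges_at (G i) u"
    using semi_edges_at_consistent[OF consistent_members[OF i j(1)] pregraph_family[OF i]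
        pregraph_family[OF j(1)] u j(2)] R_home[OF i u] j_def by simp
  also have "\<dots> = semi_edges_at (rotate_by R (G i)) u" by (rule semi_edges_at_rotate_by[symmetric])
  finally show ?thesis .
qed

lemma edges_at_rotate_by_home:
  assumes i: "i \<in> I" and u: "u \<in> V (G i)"
  shows "edges_at (rotate_by (Rot i) (G i)) u = edges_at (rotate_by R (G i)) u"
proof -
  define j where "j = home I G u"
  have j: "j \<in> I" "u \<in> V (G j)" using home_in[where G = G, OF i u] unfolding j_def by auto
  have R_neighbour: "R v = Rot j v" if "(p, \<gamma>, v, q) \<in> edges_at (G j) u" for p \<gamma> v q
  proof -
    have e: "(u, p, \<gamma>, v, q) \<in> E (G j)" using that unfolding edges_at_def by simp
    then have "v \<in> V (G j)" using pregraph_edgeD[OF pregraph_family[OF j(1)]] by blast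
    then show ?thesis using R_home[OF j(1)] home_edge[OF j(1) e] j_def by simp
  qed
  have "edges_at (rotate_by (Rot i) (G i)) u = edges_at (rotate_by (Rot j) (G j)) u"
    using edges_at_consistent[OF consistent_rotated_members[OF i j(1)] pregraph_rotated_family[OF i]
        pregraph_rotated_family[OF j(1)]] u j by simp
  also have "\<dots> = (\<lambda>(p, \<gamma>, v, q). (Rot j u p, Rot j v \<circ> \<gamma> \<circ> inv (Rot j u), v, Rot j v q))
      ` edges_at (G j) u"
    by (rule edges_at_rotate_by)
  also have "\<dots> = (\<lambda>(p, \<gamma>, v, q). (R u p, R v \<circ> \<gamma> \<circ> inv (R u), v, R v q)) ` edges_at (G j) u"
    using R_neighbour R_home[OF i u] j_def by (intro image_cong) auto
  also have "\<dots> = edges_at (rotate_by R (G i)) u"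
    using edges_at_consistent[OF consistent_members[OF i j(1)] pregraph_family[OF i]
        pregraph_family[OF j(1)] u j(2)] by (simp add: edges_at_rotate_by)
  finally show ?thesis .
qed

lemma rotate_by_home:
  assumes i: "i \<in> I"
  shows "rotate_by (Rot i) (G i) = rotate_by R (G i)"
proof (rule graph_eqI)
  fix u
  show "semi_edges_at (rotate_by (Rot i) (G i)) u = semi_edges_at (rotate_by R (G i)) u"
  proof (cases "u \<in> V (G i)")
    case False
    then show ?thesis
      using pregraph_semi_edges_at_outside[OF pregraph_family[OF i]] by (simp add: semi_edges_at_rotate_by)
  qed (rule semi_edges_at_rotate_by_home[OF i])
  show "edges_at (rotate_by (Rot i) (G i)) u = edges_at (rotate_by R (G i)) u"
  proof (cases "u \<in> V (G i)")
    case False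
    then show ?thesis
      using pregraph_edges_at_outside[OF pregraph_family[OF i]] by (simp add: edges_at_rotate_by)
  qed (rule edges_at_rotate_by_home[OF i])
qed simp

lemma graph_Union_rotate_by_home:
  "graph_Union I (\<lambda>i. rotate_by (Rot i) (G i)) = rotate_by R (graph_Union I G)"
proof -
  have "graph_Union I (\<lambda>i. rotate_by (Rot i) (G i)) = graph_Union I (\<lambda>i. rotate_by R (G i))"
    using rotate_by_home by (simp add: graph_Union_def)
  then show ?thesis by (simp add: rotate_by_graph_Union)
qed

end

theorem mainTheorem9:
  fixes n k :: nat
    and G :: "nat \<Rightarrow> 'v graph"
    and r :: "nat \<Rightarrow> 'v rotseq"
  assumes "n \<ge> 1"
    and "\<And>i. i < k \<Longrightarrow> is_graph n (G i)"
    and "\<And>i j. i < k \<Longrightarrow> j < k \<Longrightarrow> i \<noteq> j \<Longrightarrow> consistent n (G i) (G j)"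
    and "\<And>i. i < k \<Longrightarrow> is_rotseq n (r i)"
    and "\<And>i j. i < k \<Longrightarrow> j < k \<Longrightarrow> i \<noteq> j \<Longrightarrow> rotseq_consistent (r i) (r j)"
    and "\<And>i j. i < k \<Longrightarrow> j < k \<Longrightarrow> i \<noteq> j \<Longrightarrow>
           consistent n (apply_rotseq (r i) (G i)) (apply_rotseq (r j) (G j))"
  shows "\<exists>rr. is_rotseq n rr \<and>
           graph_Union {..<k} (\<lambda>i. apply_rotseq (r i) (G i)) =
           apply_rotseq rr (graph_Union {..<k} G)"
proof -
  have rotated: "apply_rotseq (r i) (G i) = rotate_by (rot_at (r i)) (G i)" if "i < k" for i
    using apply_rotseq_eq_rotate_by[OF assms(4)[OF that]] .
  obtain rr where rr: "is_rotseq n rr"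
    and rr_home: "\<forall>i\<in>{..<k}. \<forall>u\<in>V (G i). rot_at rr u = rot_at (r (home {..<k} G u)) u"
    using rotseq_of_home_rotations[of "{..<k}" n r G] assms(4) by auto
  have "graph_Union {..<k} (\<lambda>i. rotate_by (rot_at (r i)) (G i))
      = rotate_by (rot_at rr) (graph_Union {..<k} G)"
  proof (rule graph_Union_rotate_by_home)
    show "consistent n (rotate_by (rot_at (r i)) (G i)) (rotate_by (rot_at (r j)) (G j))"
      if "i \<in> {..<k}" "j \<in> {..<k}" "i \<noteq> j" for i j
      using that assms(6)[of i j] rotated by simp
  qed (use assms(2,3) even_rot_rot_at[OF assms(4)] rr_home in auto)
  moreover have "graph_Union {..<k} (\<lambda>i. apply_rotseq (r i) (G i))
      = graph_Union {..<k} (\<lambda>i. rotate_by (rot_at (r i)) (G i))"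
    by (simp add: graph_Union_def rotated)
  ultimately show ?thesis using rr apply_rotseq_eq_rotate_by[OF rr] by auto
qed

end
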